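(* For all $n\ge0$, $$F_n(x,y,q)=\sum_{k\ge0}x^{n-2k}y^kq^{\binom k2+\binom{n-k}2}\begin{bmatrix}n-k\\k\end{bmatrix}_q.$$ More precisely, for each $k$, the sum of $q^{rb(\pi)}$ over those $\pi\in\Pi_n(13/2,123)$ with exactly $k$ two-element blocks equals $q^{\binom k2+\binom{n-k}2}\begin{bmatrix}n-k\\k\end{bmatrix}_q$.
   Context: $\Pi_n(13/2,123)$ is the set of layered matchings of $[n]$: set partitions whose blocks are consecutive intervals $[1,i_1]/\dots/[i_{k-1}+1,n]$, each of size $1$ or $2$. $\Pi_0(13/2,123)$ consists of the empty partition. For $\pi=B_1/\dots/B_k$ with $\min B_1<\dots<\min B_k$, $rb(\pi)$ is the number of pairs $(b,B_j)$ with $b\in B_i$, $j>i$, $\max B_j>b$. Let $s(\pi)$ and $d(\pi)$ be the numbers of blocks of size $1$ and $2$. Define $F_n(x,y,q)=\sum_{\pi\in\Pi_n(13/2,123)}x^{s(\pi)}y^{d(\pi)}q^{rb(\pi)}$. The $q$-binomial coefficient is $\begin{bmatrix}n\\k\end{bmatrix}_q=\prod_{i=1}^k\frac{q^{n-i+1}-1}{q^i-1}$ for $0\le k\le n$, and it is $0$ if $k>n$. *)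

theory Defs
  imports Main "HOL-Library.Disjoint_Sets"
begin

text \<open>Layered matchings of [n]: set partitions of {1..n} whose blocks are
  intervals of size 1 or 2 (a partition into intervals is automatically
  of the form [1,i_1]/.../[i_(k-1)+1,n]).\<close>
definition layered_matchings :: "nat \<Rightarrow> nat set set set" where
  "layered_matchings n = {P. partition_on {1..n} P \<and>
     (\<forall>B\<in>P. \<exists>a b. B = {a..b} \<and> (card B = 1 \<or> card B = 2))}"

text \<open>rb: pairs (b, B_j) with b in B_i, j > i (i.e. min B_j > min B_i), max B_j > b.\<close>
definition rb :: "nat set set \<Rightarrow> nat" where
  "rb P = card {(b, C). \<exists>B\<in>P. b \<in> B \<and> C \<in> P \<and> Min B < Min C \<and> b < Max C}"

definition singles :: "nat set set \<Rightarrow> nat" where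
  "singles P = card {B\<in>P. card B = 1}"

definition doubles :: "nat set set \<Rightarrow> nat" where
  "doubles P = card {B\<in>P. card B = 2}"

definition F :: "nat \<Rightarrow> 'a::comm_ring_1 \<Rightarrow> 'a \<Rightarrow> 'a \<Rightarrow> 'a" where
  "F n x y q = (\<Sum>P\<in>layered_matchings n. x ^ singles P * y ^ doubles P * q ^ rb P)"

definition qbinom :: "'a::field \<Rightarrow> nat \<Rightarrow> nat \<Rightarrow> 'a" where
  "qbinom q n k = (if k \<le> n then (\<Prod>i=1..k. (q ^ (n - i + 1) - 1) / (q ^ i - 1)) else 0)"

end

theory Submission
  imports Defs
begin

(* A layered matching of [n] with n \<ge> 1 is obtained, in a unique way, from a
   layered matching of [n - c] by adding the top block {n - c + 1..n} of size c \<in> {1,2}.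
   The new block starts above every old block and ends above every old element, so it
   contributes exactly n - c new pairs to rb, and none of the old pairs changes.  Hence the
   weighted count G q n k = (sum of q^rb over matchings of [n] with k doubletons) satisfies
     G q (n+2) k = q^(n+1) G q (n+1) k + q^n G q n (k-1),
   with G q 0 k = G q 1 k = [k = 0].  The q-Pascal rule
     [m choose k]_q = q^k [m-1 choose k]_q + [m-1 choose k-1]_q
   shows that the closed form H q n k = q^(C(k,2) + C(n-k,2)) [n-k choose k]_q obeys the same
   recurrence, so G = H by two-step induction.  Since every matching of [n] with k doubletons
   has n - 2k singletons, grouping the sum F n x y q by the number of doubletons gives the
   generating-function identity. *)

section \<open>q-binomial coefficients\<close>

definition q_falling :: "'a::field \<Rightarrow> nat \<Rightarrow> nat \<Rightarrow> 'a" where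
  "q_falling q m k = (\<Prod>i<k. q ^ (m - i) - 1)"

definition q_factorial :: "'a::field \<Rightarrow> nat \<Rightarrow> 'a" where
  "q_factorial q k = (\<Prod>i<k. q ^ Suc i - 1)"

lemma qbinom_0 [simp]: "qbinom q m 0 = 1"
  by (simp add: qbinom_def)

lemma qbinom_gt [simp]: "m < k \<Longrightarrow> qbinom q m k = 0"
  by (simp add: qbinom_def)

lemma qbinom_quotient:
  assumes "k \<le> m"
  shows "qbinom q m k = q_falling q m k / q_factorial q k"
proof -
  have "qbinom q m k = (\<Prod>i=Suc 0..k. (q ^ (m - i + 1) - 1) / (q ^ i - 1))"
    using assms by (simp add: qbinom_def)
  also have "\<dots> = (\<Prod>i<k. (q ^ (m - Suc i + 1) - 1) / (q ^ Suc i - 1))"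
    by (rule prod.atLeast1_atMost_eq)
  also have "\<dots> = (\<Prod>i<k. (q ^ (m - i) - 1) / (q ^ Suc i - 1))"
  proof (intro prod.cong refl)
    fix i assume "i \<in> {..<k}"
    then have "m - Suc i + 1 = m - i" using assms by simp
    then show "(q ^ (m - Suc i + 1) - 1) / (q ^ Suc i - 1) = (q ^ (m - i) - 1) / (q ^ Suc i - 1)"
      by simp
  qed
  finally show ?thesis
    by (simp add: prod_dividef q_falling_def q_factorial_def)
qed

lemma q_factorial_nonzero:
  assumes "\<forall>i\<in>{1..k}. q ^ i \<noteq> 1"
  shows "q_factorial q k \<noteq> 0"
  using assms unfolding q_factorial_def by (auto simp: prod_zero_iff) (use Suc_leI in force)

text \<open>The q-Pascal rule; it needs q^i \<noteq> 1 only for i \<le> k, to divide by the q-factorial.\<close>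
lemma qbinom_pascal:
  fixes q :: "'a::field"
  assumes q: "\<forall>i\<in>{1..Suc j}. q ^ i \<noteq> 1"
  shows "qbinom q (Suc l) (Suc j) = q ^ Suc j * qbinom q l (Suc j) + qbinom q l j"
proof (cases "j \<le> l")
  case False
  then show ?thesis by simp
next
  case jl: True
  have fact_Suc: "q_factorial q (Suc j) = q_factorial q j * (q ^ Suc j - 1)"
    by (simp add: q_factorial_def)
  have "q_factorial q (Suc j) \<noteq> 0"
    using q_factorial_nonzero[OF q] .
  then have nz: "q_factorial q j \<noteq> 0" "q ^ Suc j - 1 \<noteq> 0"
    by (simp_all add: fact_Suc)
  have fall_Suc: "q_falling q (Suc l) (Suc j) = (q ^ Suc l - 1) * q_falling q l j"
    by (simp add: q_falling_def prod.lessThan_Suc_shift del: prod.lessThan_Suc)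
  show ?thesis
  proof (cases "j = l")
    case True
    from this nz fall_Suc fact_Suc show ?thesis
      by (simp add: qbinom_quotient)
  next
    case False
    then have jl': "Suc j \<le> l" using jl by simp
    have fall_top: "q_falling q l (Suc j) = q_falling q l j * (q ^ (l - j) - 1)"
      by (simp add: q_falling_def)
    have split: "q ^ Suc j * (q ^ (l - j) - 1) + (q ^ Suc j - 1) = q ^ Suc l - 1"
      using jl' by (simp add: algebra_simps flip: power_add)
    let ?N = "q_falling q l j" and ?D = "q_factorial q j"
    have "q ^ Suc j * qbinom q l (Suc j) + qbinom q l j
          = q ^ Suc j * (?N * (q ^ (l - j) - 1)) / (?D * (q ^ Suc j - 1)) + ?N / ?D"
      using jl jl' by (simp add: qbinom_quotient fall_top fact_Suc)
    also have "\<dots> = ?N * (q ^ Suc j * (q ^ (l - j) - 1) + (q ^ Suc j - 1)) / (?D * (q ^ Suc j - 1))"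
      using nz by (simp add: field_simps)
    also have "\<dots> = qbinom q (Suc l) (Suc j)"
      using jl by (simp only: split) (simp add: qbinom_quotient fall_Suc fact_Suc mult.commute)
    finally show ?thesis ..
  qed
qed

section \<open>The block decomposition of layered matchings\<close>

abbreviation LM :: "nat \<Rightarrow> nat set set set" where
  "LM \<equiv> layered_matchings"

lemma LM_partition: "P \<in> LM m \<Longrightarrow> partition_on {1..m} P"
  by (simp add: layered_matchings_def)

lemma LM_union: "P \<in> LM m \<Longrightarrow> \<Union>P = {1..m}"
  using partition_onD1[OF LM_partition] by metis

lemma LM_block:
  assumes "P \<in> LM m" "B \<in> P"
  shows "B \<noteq> {} \<and> B \<subseteq> {1..m} \<and> finite B"
proof -
  have "B \<subseteq> {1..m}" using assms LM_union by blast
  then show ?thesis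
    using partition_onD3[OF LM_partition[OF assms(1)]] assms(2) finite_subset by blast
qed

lemma LM_finite_blocks: "P \<in> LM m \<Longrightarrow> finite P"
  using LM_union by (metis finite_UnionD finite_atLeastAtMost)

lemma finite_LM: "finite (LM m)"
proof (rule finite_subset)
  show "LM m \<subseteq> Pow (Pow {1..m})" using LM_block by blast
qed simp

lemma LM_0: "LM 0 = {{}}"
  by (auto simp: layered_matchings_def partition_on_empty)

definition top_block :: "nat \<Rightarrow> nat \<Rightarrow> nat set" where
  "top_block m c = {Suc m..m + c}"

lemma card_top_block [simp]: "card (top_block m c) = c"
  by (simp add: top_block_def)

lemma top_block_notin: "P \<in> LM m \<Longrightarrow> 1 \<le> c \<Longrightarrow> top_block m c \<notin> P"
  using LM_block[of P m "top_block m c"] by (auto simp: top_block_def)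

lemma add_top_block:
  assumes P: "P \<in> LM m" and c: "c = 1 \<or> c = 2"
  shows "insert (top_block m c) P \<in> LM (m + c)"
proof -
  have disj: "disjnt (top_block m c) (\<Union>P)"
    using LM_union[OF P] by (auto simp: top_block_def disjnt_def)
  have rest: "{1..m + c} - top_block m c = {1..m}"
    using c by (auto simp: top_block_def)
  have "partition_on {1..m + c} (insert (top_block m c) P)"
    unfolding partition_on_insert[OF disj] rest
    using LM_partition[OF P] c by (auto simp: top_block_def)
  then show ?thesis
    using P c by (auto simp: layered_matchings_def top_block_def)
qed

lemma remove_top_block:
  assumes Q: "Q \<in> LM n" and n: "1 \<le> n"
  obtains c P where "c = 1 \<or> c = 2" "c \<le> n" "P \<in> LM (n - c)"
    "Q = insert (top_block (n - c) c) P"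
proof -
  obtain B where B: "B \<in> Q" "n \<in> B"
    using LM_union[OF Q] n by (metis UnionE atLeastAtMost_iff order_refl)
  obtain a b where ab: "B = {a..b}" and c12: "card B = 1 \<or> card B = 2"
    using Q B(1) unfolding layered_matchings_def by blast
  have sub: "B \<subseteq> {1..n}" using LM_block[OF Q B(1)] by simp
  then have "b = n" "1 \<le> a" "a \<le> n"
    using ab B(2) by (fastforce simp: subset_iff)+
  define c where "c = card B"
  have "c = Suc n - a" using ab \<open>b = n\<close> by (simp add: c_def)
  then have cn: "c \<le> n" and a: "a = Suc (n - c)" and nc: "n - c + c = n"
    using \<open>1 \<le> a\<close> \<open>a \<le> n\<close> by arith+
  have B_top: "B = top_block (n - c) c"
    unfolding top_block_def nc a[symmetric] using ab \<open>b = n\<close> by simp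
  have disj: "disjnt B (\<Union>(Q - {B}))"
    using partition_onD2[OF LM_partition[OF Q]] B(1)
    by (auto simp: disjnt_def disjoint_def)
  have "partition_on ({1..n} - B) (Q - {B})"
    using LM_partition[OF Q] partition_on_insert[OF disj, of "{1..n}"] B(1)
    by (simp add: insert_absorb)
  moreover have "{1..n} - B = {1..n - c}"
    using B_top cn nc unfolding top_block_def by auto
  ultimately have "Q - {B} \<in> LM (n - c)"
    using Q by (auto simp: layered_matchings_def)
  moreover have "Q = insert (top_block (n - c) c) (Q - {B})"
    using B(1) B_top by auto
  ultimately show thesis
    using that c12 cn by (simp add: c_def)
qed

lemma LM_1: "LM (Suc 0) = insert (top_block 0 1) ` LM 0"
proof
  show "insert (top_block 0 1) ` LM 0 \<subseteq> LM (Suc 0)"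
  proof (rule image_subsetI)
    fix P assume "P \<in> LM 0"
    from add_top_block[OF this, of 1] show "insert (top_block 0 1) P \<in> LM (Suc 0)" by simp
  qed
  show "LM (Suc 0) \<subseteq> insert (top_block 0 1) ` LM 0"
  proof
    fix Q assume "Q \<in> LM (Suc 0)"
    then obtain c P where c: "c = 1 \<or> c = 2" "c \<le> Suc 0" and P: "P \<in> LM (Suc 0 - c)"
      and Q: "Q = insert (top_block (Suc 0 - c) c) P"
      by (rule remove_top_block) simp
    from c have "c = 1" by simp
    with P Q show "Q \<in> insert (top_block 0 1) ` LM 0" by simp
  qed
qed

lemma LM_Suc_Suc:
  "LM (Suc (Suc n)) = insert (top_block (Suc n) 1) ` LM (Suc n) \<union> insert (top_block n 2) ` LM n"
proof
  show "insert (top_block (Suc n) 1) ` LM (Suc n) \<union> insert (top_block n 2) ` LM n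
        \<subseteq> LM (Suc (Suc n))"
  proof (rule Un_least; rule image_subsetI)
    fix P assume "P \<in> LM (Suc n)"
    from add_top_block[OF this, of 1]
    show "insert (top_block (Suc n) 1) P \<in> LM (Suc (Suc n))" by simp
  next
    fix P assume "P \<in> LM n"
    from add_top_block[OF this, of 2]
    show "insert (top_block n 2) P \<in> LM (Suc (Suc n))" by simp
  qed
  show "LM (Suc (Suc n))
        \<subseteq> insert (top_block (Suc n) 1) ` LM (Suc n) \<union> insert (top_block n 2) ` LM n"
  proof
    fix Q assume "Q \<in> LM (Suc (Suc n))"
    then obtain c P where c: "c = 1 \<or> c = 2" and P: "P \<in> LM (Suc (Suc n) - c)"
      and Q: "Q = insert (top_block (Suc (Suc n) - c) c) P"
      by (rule remove_top_block) simp
    from c show "Q \<in> insert (top_block (Suc n) 1) ` LM (Suc n) \<union> insert (top_block n 2) ` LM n"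
    proof
      assume "c = 1"
      with P Q show ?thesis by simp
    next
      assume "c = 2"
      with P Q show ?thesis by simp
    qed
  qed
qed

text \<open>The two ways of building a matching of [n + 2] give different matchings: only in the
  first one is {n + 2} a block.\<close>
lemma top_block_images_disjoint:
  "insert (top_block (Suc n) 1) ` LM (Suc n) \<inter> insert (top_block n 2) ` LM n = {}"
proof -
  have "top_block (Suc n) 1 \<notin> insert (top_block n 2) P" if P: "P \<in> LM n" for P
  proof -
    have "top_block (Suc n) 1 \<noteq> top_block n 2"
    proof
      assume "top_block (Suc n) 1 = top_block n 2"
      then have "card (top_block (Suc n) 1) = card (top_block n 2)" by (rule arg_cong)
      then show False by simp
    qed
    moreover have "top_block (Suc n) 1 \<notin> P"
    proof
      assume "top_block (Suc n) 1 \<in> P"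
      then have "top_block (Suc n) 1 \<subseteq> {1..n}" using LM_block[OF P] by blast
      then show False by (simp add: top_block_def)
    qed
    ultimately show ?thesis by simp
  qed
  then show ?thesis
    by (auto simp: image_iff)
qed

lemma inj_on_add_top_block: "1 \<le> c \<Longrightarrow> inj_on (insert (top_block m c)) (LM m)"
  by (rule inj_onI) (metis insert_ident top_block_notin)

lemma sum_over_added_top_block:
  "1 \<le> c \<Longrightarrow> (\<Sum>Q\<in>insert (top_block m c) ` LM m. f Q) = (\<Sum>P\<in>LM m. f (insert (top_block m c) P))"
  by (simp add: sum.reindex inj_on_add_top_block)

section \<open>Effect of a top block on the statistics\<close>

definition rb_pairs :: "nat set set \<Rightarrow> (nat \<times> nat set) set" where
  "rb_pairs P = {(b, C). \<exists>B\<in>P. b \<in> B \<and> C \<in> P \<and> Min B < Min C \<and> b < Max C}"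

lemma rb_eq_card_rb_pairs: "rb P = card (rb_pairs P)"
  by (simp add: rb_def rb_pairs_def)

text \<open>A top block pairs with every element of [m] and with nothing else; the old pairs are
  unaffected because the top block starts above all old blocks.\<close>
lemma rb_pairs_add_top_block:
  assumes P: "P \<in> LM m" and c: "1 \<le> c"
  shows "rb_pairs (insert (top_block m c) P) = rb_pairs P \<union> {1..m} \<times> {top_block m c}"
proof -
  let ?C = "top_block m c"
  have Min_below: "Min B \<le> m" if "B \<in> P" for B
    using LM_block[OF P that] Min_in by fastforce
  have Min_C: "Min ?C = Suc m" and Max_C: "Max ?C = m + c"
    using c unfolding top_block_def by (auto intro: Min_eqI Max_eqI)
  have "rb_pairs (insert ?C P) \<subseteq> rb_pairs P \<union> {1..m} \<times> {?C}"
  proof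
    fix p assume "p \<in> rb_pairs (insert ?C P)"
    then obtain b B C where p: "p = (b, C)" "B \<in> insert ?C P" "b \<in> B" "C \<in> insert ?C P"
      "Min B < Min C" "b < Max C" unfolding rb_pairs_def by blast
    have "B \<noteq> ?C"
    proof
      assume "B = ?C"
      then have above: "Suc m < Min C" using p(5) Min_C by simp
      then have "C \<in> P" using p(4) Min_C by auto
      then show False using Min_below above by fastforce
    qed
    then have "B \<in> P" using p by simp
    then show "p \<in> rb_pairs P \<union> {1..m} \<times> {?C}"
      using p LM_block[OF P] unfolding rb_pairs_def by blast
  qed
  moreover have "{1..m} \<times> {?C} \<subseteq> rb_pairs (insert ?C P)"
  proof
    fix p assume "p \<in> {1..m} \<times> {?C}"
    then obtain b where b: "p = (b, ?C)" "b \<in> {1..m}" by auto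
    then obtain B where "B \<in> P" "b \<in> B" using LM_union[OF P] by blast
    then show "p \<in> rb_pairs (insert ?C P)"
      using b Min_below Min_C Max_C c unfolding rb_pairs_def by force
  qed
  moreover have "rb_pairs P \<subseteq> rb_pairs (insert ?C P)"
    unfolding rb_pairs_def by blast
  ultimately show ?thesis by blast
qed

lemma rb_add_top_block:
  assumes P: "P \<in> LM m" and c: "1 \<le> c"
  shows "rb (insert (top_block m c) P) = rb P + m"
proof -
  have "rb_pairs P \<subseteq> {1..m} \<times> P"
    using LM_union[OF P] unfolding rb_pairs_def by auto
  then have fin: "finite (rb_pairs P)"
    using LM_finite_blocks[OF P] by (auto intro: finite_subset)
  have disj: "rb_pairs P \<inter> {1..m} \<times> {top_block m c} = {}"
    using top_block_notin[OF P c] unfolding rb_pairs_def by auto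
  show ?thesis
    unfolding rb_eq_card_rb_pairs rb_pairs_add_top_block[OF P c]
    using card_Un_disjoint[OF fin _ disj] by simp
qed

lemma doubles_add_top_block:
  assumes P: "P \<in> LM m" and c: "1 \<le> c"
  shows "doubles (insert (top_block m c) P) = doubles P + (if c = 2 then 1 else 0)"
proof -
  have "{B \<in> insert (top_block m c) P. card B = 2}
        = (if c = 2 then insert (top_block m c) else id) {B \<in> P. card B = 2}"
    by auto
  then show ?thesis
    using top_block_notin[OF P c] LM_finite_blocks[OF P]
    by (cases "c = 2") (simp_all add: doubles_def)
qed

lemma singles_add_top_block:
  assumes P: "P \<in> LM m" and c: "1 \<le> c"
  shows "singles (insert (top_block m c) P) = singles P + (if c = 1 then 1 else 0)"
proof -
  have "{B \<in> insert (top_block m c) P. card B = 1}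
        = (if c = 1 then insert (top_block m c) else id) {B \<in> P. card B = 1}"
    by auto
  then show ?thesis
    using top_block_notin[OF P c] LM_finite_blocks[OF P]
    by (cases "c = 1") (simp_all add: singles_def)
qed

lemma singles_plus_doubles: "P \<in> LM n \<Longrightarrow> singles P + 2 * doubles P = n"
proof (induction n arbitrary: P rule: less_induct)
  case (less n)
  show ?case
  proof (cases "n = 0")
    case True
    then show ?thesis using less.prems by (simp add: LM_0 singles_def doubles_def)
  next
    case False
    obtain c P0 where c: "c = 1 \<or> c = 2" "c \<le> n" and P0: "P0 \<in> LM (n - c)"
      and P: "P = insert (top_block (n - c) c) P0"
      by (rule remove_top_block[OF less.prems]) (use False in simp_all)
    have "n - c < n" using c False by auto
    then have IH: "singles P0 + 2 * doubles P0 = n - c"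
      using less.IH P0 by blast
    from c(1) show ?thesis
    proof
      assume "c = 1"
      then show ?thesis
        using IH c(2) singles_add_top_block[OF P0] doubles_add_top_block[OF P0] by (simp add: P)
    next
      assume "c = 2"
      then show ?thesis
        using IH c(2) singles_add_top_block[OF P0] doubles_add_top_block[OF P0] by (simp add: P)
    qed
  qed
qed

section \<open>The recurrence for the rb-distribution\<close>

definition G :: "'a::field \<Rightarrow> nat \<Rightarrow> nat \<Rightarrow> 'a" where
  "G q n k = (\<Sum>P\<in>LM n. if doubles P = k then q ^ rb P else 0)"

definition H :: "'a::field \<Rightarrow> nat \<Rightarrow> nat \<Rightarrow> 'a" where
  "H q n k = q ^ ((k choose 2) + ((n - k) choose 2)) * qbinom q (n - k) k"

lemma G_0: "G q 0 k = (if k = 0 then 1 else 0)"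
  by (simp add: G_def LM_0 rb_def doubles_def)

lemma G_1: "G q (Suc 0) k = (if k = 0 then 1 else 0)"
proof -
  have empty: "rb {} = 0" "doubles {} = 0"
    by (simp_all add: rb_def doubles_def)
  have "G q (Suc 0) k
        = (\<Sum>P\<in>LM 0. if doubles (insert (top_block 0 1) P) = k
                       then q ^ rb (insert (top_block 0 1) P) else 0)"
    unfolding G_def LM_1 by (rule sum_over_added_top_block) simp
  also have "\<dots> = (if k = 0 then 1 else 0)"
    using rb_add_top_block[of "{}" 0 1] doubles_add_top_block[of "{}" 0 1]
    by (simp add: LM_0 empty)
  finally show ?thesis .
qed

lemma G_Suc_Suc:
  "G q (Suc (Suc n)) k = q ^ Suc n * G q (Suc n) k + (if k = 0 then 0 else q ^ n * G q n (k - 1))"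
proof -
  let ?f = "\<lambda>P. if doubles P = k then q ^ rb P else 0"
  let ?ones = "insert (top_block (Suc n) 1) ` LM (Suc n)"
  let ?twos = "insert (top_block n 2) ` LM n"
  have "G q (Suc (Suc n)) k = sum ?f ?ones + sum ?f ?twos"
    unfolding G_def LM_Suc_Suc
    by (intro sum.union_disjoint finite_imageI finite_LM top_block_images_disjoint)
  also have "sum ?f ?ones = (\<Sum>P\<in>LM (Suc n). ?f (insert (top_block (Suc n) 1) P))"
    by (rule sum_over_added_top_block) simp
  also have "\<dots> = (\<Sum>P\<in>LM (Suc n). q ^ Suc n * ?f P)"
    by (rule sum.cong) (simp_all add: rb_add_top_block doubles_add_top_block power_add)
  also have "\<dots> = q ^ Suc n * G q (Suc n) k"
    by (simp add: G_def sum_distrib_left)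
  also have "sum ?f ?twos = (\<Sum>P\<in>LM n. ?f (insert (top_block n 2) P))"
    by (rule sum_over_added_top_block) simp
  also have "\<dots> = (\<Sum>P\<in>LM n. if k = 0 then 0 else q ^ n * (if doubles P = k - 1 then q ^ rb P else 0))"
    by (rule sum.cong) (auto simp: rb_add_top_block doubles_add_top_block power_add)
  also have "\<dots> = (if k = 0 then 0 else q ^ n * G q n (k - 1))"
    by (simp add: G_def sum_distrib_left)
  finally show ?thesis .
qed

lemma choose_2_Suc: "Suc m choose 2 = m + (m choose 2)"
  by (simp add: numeral_2_eq_2)

text \<open>The closed form satisfies the same recurrence, by the q-Pascal rule.\<close>
lemma H_Suc_Suc:
  fixes q :: "'a::field"
  assumes q: "\<forall>i\<in>{1..Suc (Suc n)}. q ^ i \<noteq> 1"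
  shows "H q (Suc (Suc n)) k = q ^ Suc n * H q (Suc n) k + (if k = 0 then 0 else q ^ n * H q n (k - 1))"
proof (cases k)
  case 0
  then show ?thesis by (simp add: H_def choose_2_Suc power_add)
next
  case (Suc j)
  show ?thesis
  proof (cases "j \<le> n")
    case False
    then show ?thesis using Suc by (simp add: H_def)
  next
    case True
    define l where "l = n - j"
    have n: "n = j + l" and m: "Suc n - j = Suc l" "Suc n - Suc j = l"
      using True by (auto simp: l_def)
    have "\<forall>i\<in>{1..Suc j}. q ^ i \<noteq> 1" using q True by auto
    from qbinom_pascal[OF this, of l] show ?thesis
      using Suc m unfolding H_def n
      by (simp add: choose_2_Suc algebra_simps power_add)
  qed
qed

lemma G_eq_H:
  fixes q :: "'a::field"
  shows "\<forall>i\<in>{1..n}. q ^ i \<noteq> 1 \<Longrightarrow> G q n k = H q n k"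
proof (induction n arbitrary: k rule: induct_nat_012)
  case 0
  then show ?case by (cases k) (simp_all add: G_0 H_def binomial_eq_0)
next
  case 1
  then show ?case by (cases k) (simp_all add: G_1 H_def binomial_eq_0)
next
  case (ge2 n)
  then show ?case by (simp add: G_Suc_Suc H_Suc_Suc)
qed

theorem theorem4p6:
  fixes x y q :: "'a::field" and n :: nat
  assumes "\<forall>i\<in>{1..n}. q ^ i \<noteq> 1"
  shows "(\<forall>k. (\<Sum>P\<in>{P\<in>layered_matchings n. doubles P = k}. q ^ rb P)
              = q ^ ((k choose 2) + ((n - k) choose 2)) * qbinom q (n - k) k)
         \<and> F n x y q = (\<Sum>k\<le>n. x ^ (n - 2 * k) * y ^ k
                          * q ^ ((k choose 2) + ((n - k) choose 2)) * qbinom q (n - k) k)"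
proof -
  have dist: "(\<Sum>P\<in>{P\<in>LM n. doubles P = k}. q ^ rb P) = H q n k" for k
    using G_eq_H[OF assms] by (simp add: G_def sum.inter_filter[OF finite_LM])
  have singles: "singles P = n - 2 * doubles P" if "P \<in> LM n" for P
    using singles_plus_doubles[OF that] by arith
  have "F n x y q = (\<Sum>P\<in>LM n. x ^ (n - 2 * doubles P) * y ^ doubles P * q ^ rb P)"
    unfolding F_def by (simp add: singles)
  also have "\<dots> = (\<Sum>k\<le>n. \<Sum>P\<in>{P\<in>LM n. doubles P = k}.
                        x ^ (n - 2 * doubles P) * y ^ doubles P * q ^ rb P)"
  proof (rule sum.group[symmetric, OF finite_LM finite_atMost])
    show "doubles ` LM n \<subseteq> {..n}" using singles_plus_doubles by fastforce
  qed
  also have "\<dots> = (\<Sum>k\<le>n. x ^ (n - 2 * k) * y ^ k * H q n k)"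
    by (rule sum.cong) (simp_all add: sum_distrib_left mult.assoc flip: dist)
  finally show ?thesis
    using dist by (simp add: H_def mult.assoc)
qed

end
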